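(* Let $P\subseteq[0,1]^d$ be a $0/1$-polytope and let $\varepsilon\in(0,1)$, $M>0$ be such that every polyhedron $K\subseteq\mathbb{R}^d$ with $P^\uparrow\subseteq K\subseteq(1-\varepsilon)P^\uparrow$ satisfies $\operatorname{xc}(K)\geq M$. Then $P^\uparrow\cap[0,1]^d$ does not admit an $\frac{\varepsilon}{d}$-LEF of size less than $M-3d$.
   Context: $P^\uparrow:=P+\mathbb{R}^d_{\geq0}$. $\operatorname{xc}(K)$ is the minimum number of facets of a polyhedron $Q$ of which $K$ is an affine image. Relative distance: for convex $A\subseteq B\subseteq\mathbb{R}^d$, $\operatorname{rdist}(A,B)=\sup_{\pi}\frac{\sup_{b\in B}\inf_{a\in A}|\pi(b)-\pi(a)|}{\sup_{a,a'\in A}|\pi(a)-\pi(a')|}$ over linear $\pi:\mathbb{R}^d\to\mathbb{R}$ (denominator $\infty$ and $0/0$ read as $0$). An $\varepsilon$-LEF of a convex set $C\subseteq\mathbb{R}^d$ is a pair $(Q,\pi)$, $Q\subseteq\mathbb{R}^\ell$ a polyhedron, $\pi:\mathbb{R}^\ell\to\mathbb{R}^d$ affine, with $C\subseteq\pi(Q)$ and $\operatorname{rdist}(C,\pi(Q))\leq\varepsilon$; its size is the number of facets of $Q$. *)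

theory Defs
  imports "HOL-Analysis.Analysis" "HOL-Library.Extended_Real"
begin

text \<open>Points of R^l are represented as functions nat => real vanishing outside {0..<l}.\<close>

definition RL :: "nat \<Rightarrow> (nat \<Rightarrow> real) set" where
  "RL l = {x. \<forall>i\<ge>l. x i = 0}"

definition dotL :: "nat \<Rightarrow> (nat \<Rightarrow> real) \<Rightarrow> (nat \<Rightarrow> real) \<Rightarrow> real" where
  "dotL l c x = (\<Sum>i<l. c i * x i)"

definition polyhedronL :: "nat \<Rightarrow> (nat \<Rightarrow> real) set \<Rightarrow> bool" where
  "polyhedronL l Q \<longleftrightarrow> (\<exists>H :: ((nat \<Rightarrow> real) \<times> real) set. finite H \<and>
      Q = {x \<in> RL l. \<forall>(c, e)\<in>H. dotL l c x \<le> e})"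

text \<open>Faces of a polyhedron (all faces of a polyhedron are exposed).\<close>
definition faceL :: "nat \<Rightarrow> (nat \<Rightarrow> real) set \<Rightarrow> (nat \<Rightarrow> real) set \<Rightarrow> bool" where
  "faceL l F Q \<longleftrightarrow> (\<exists>c e. (\<forall>x\<in>Q. dotL l c x \<le> e) \<and> F = {x \<in> Q. dotL l c x = e})"

definition facetL :: "nat \<Rightarrow> (nat \<Rightarrow> real) set \<Rightarrow> (nat \<Rightarrow> real) set \<Rightarrow> bool" where
  "facetL l F Q \<longleftrightarrow> faceL l F Q \<and> F \<noteq> {} \<and> F \<noteq> Q \<and>
     (\<forall>G. faceL l G Q \<and> G \<noteq> Q \<and> F \<subseteq> G \<longrightarrow> G = F)"

definition nfacets :: "nat \<Rightarrow> (nat \<Rightarrow> real) set \<Rightarrow> nat" where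
  "nfacets l Q = card {F. facetL l F Q}"

definition affmap :: "nat \<Rightarrow> (nat \<Rightarrow> real ^ 'd) \<Rightarrow> real ^ 'd \<Rightarrow> (nat \<Rightarrow> real) \<Rightarrow> real ^ 'd" where
  "affmap l a b x = b + (\<Sum>i<l. x i *\<^sub>R a i)"

definition xc :: "(real ^ 'd) set \<Rightarrow> nat" where
  "xc K = Inf {n. \<exists>l Q a b. polyhedronL l Q \<and> K = affmap l a b ` Q \<and> nfacets l Q = n}"

definition up :: "(real ^ 'd) set \<Rightarrow> (real ^ 'd) set" where
  "up P = {p + v | p v. p \<in> P \<and> (\<forall>i. 0 \<le> v $ i)}"

definition zero_one_polytope :: "(real ^ 'd) set \<Rightarrow> bool" where
  "zero_one_polytope P \<longleftrightarrow> (\<exists>S. finite S \<and> (\<forall>x\<in>S. \<forall>i. x $ i = 0 \<or> x $ i = 1) \<and> P = convex hull S)"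

definition rdist_ratio :: "(real ^ 'd) \<Rightarrow> (real ^ 'd) set \<Rightarrow> (real ^ 'd) set \<Rightarrow> ereal" where
  "rdist_ratio c A B =
    (let num = (SUP b\<in>B. INF a\<in>A. ereal \<bar>c \<bullet> b - c \<bullet> a\<bar>);
         den = (SUP p\<in>A \<times> A. ereal \<bar>c \<bullet> fst p - c \<bullet> snd p\<bar>)
     in if den = \<infinity> then 0
        else if den = 0 then (if num = 0 then 0 else \<infinity>)
        else num / den)"

definition rdist :: "(real ^ 'd) set \<Rightarrow> (real ^ 'd) set \<Rightarrow> ereal" where
  "rdist A B = (SUP c\<in>UNIV. rdist_ratio c A B)"

definition is_LEF :: "real \<Rightarrow> (real ^ 'd) set \<Rightarrow> nat \<Rightarrow> (nat \<Rightarrow> real) set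
    \<Rightarrow> (nat \<Rightarrow> real ^ 'd) \<Rightarrow> real ^ 'd \<Rightarrow> bool" where
  "is_LEF \<epsilon> C l Q a b \<longleftrightarrow> polyhedronL l Q \<and> C \<subseteq> affmap l a b ` Q \<and>
     rdist C (affmap l a b ` Q) \<le> ereal \<epsilon>"

end

theory Submission
  imports Defs
begin

text \<open>Let \<open>(Q, \<pi>)\<close> be an \<open>\<epsilon>/d\<close>-LEF of \<open>C = P\<^sup>\<up> \<inter> [0,1]\<^sup>d\<close> and put
  \<open>K = (\<pi>(Q) \<inter> \<real>\<^sup>d\<^sub>\<ge>\<^sub>0)\<^sup>\<up>\<close>. Describing \<open>Q\<close> by its implicit equalities and one inequality
  per facet, \<open>K\<close> is the image of a polyhedron with at most \<open>d\<close> (for \<open>\<pi>(x) \<ge> 0\<close>) plus \<open>d\<close>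
  (for the added slack) more facets than \<open>Q\<close>, and it is a polyhedron by Fourier-Motzkin
  elimination. Clearly \<open>P\<^sup>\<up> \<subseteq> K\<close>. If some \<open>u \<in> \<pi>(Q) \<inter> \<real>\<^sup>d\<^sub>\<ge>\<^sub>0\<close> were outside
  \<open>(1 - \<epsilon>)P\<^sup>\<up>\<close>, a separating normal \<open>a\<close> can be chosen nonnegative since that set is
  dominant; capping its coefficients at the threshold \<open>\<delta>\<close> keeps \<open>c \<bullet> x \<ge> \<delta>\<close> on \<open>P\<^sup>\<up>\<close>
  (its vertices are 0/1) while bounding the width of \<open>C\<close> in direction \<open>c\<close> by \<open>d\<delta>\<close>, and
  \<open>c \<bullet> u < (1 - \<epsilon>)\<delta>\<close> then forces \<open>rdist(C, \<pi>(Q)) > \<epsilon>/d\<close>. So \<open>K\<close> lies between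
  \<open>P\<^sup>\<up>\<close> and \<open>(1 - \<epsilon>)P\<^sup>\<up>\<close>, whence \<open>M \<le> xc(K) \<le> size + 2d\<close>.\<close>

section \<open>Polyhedra given by explicit inequality systems\<close>

definition polyL :: "nat \<Rightarrow> ((nat \<Rightarrow> real) \<times> real) set \<Rightarrow> (nat \<Rightarrow> real) set" where
  "polyL l H = {x \<in> RL l. \<forall>k\<in>H. dotL l (fst k) x \<le> snd k}"

definition implicit_eqL :: "nat \<Rightarrow> (nat \<Rightarrow> real) set \<Rightarrow> (nat \<Rightarrow> real) \<times> real \<Rightarrow> bool" where
  "implicit_eqL l Q k \<longleftrightarrow> (\<forall>x\<in>Q. dotL l (fst k) x = snd k)"

definition tight_set :: "nat \<Rightarrow> (nat \<Rightarrow> real) set \<Rightarrow> ((nat \<Rightarrow> real) \<times> real) set \<Rightarrow> (nat \<Rightarrow> real) set" where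
  "tight_set l Q T = {x \<in> Q. \<forall>k\<in>T. dotL l (fst k) x = snd k}"

definition combL :: "real \<Rightarrow> (nat \<Rightarrow> real) \<Rightarrow> real \<Rightarrow> (nat \<Rightarrow> real) \<Rightarrow> nat \<Rightarrow> real" where
  "combL u x v y = (\<lambda>i. u * x i + v * y i)"

lemma polyhedronL_iff_polyL: "polyhedronL l Q \<longleftrightarrow> (\<exists>H. finite H \<and> Q = polyL l H)"
  unfolding polyhedronL_def polyL_def by (simp add: case_prod_beta)

lemma dotL_combL: "dotL l c (combL u x v y) = u * dotL l c x + v * dotL l c y"
  by (simp add: dotL_def combL_def algebra_simps sum.distrib sum_distrib_left)

lemma dotL_uminus: "dotL l (\<lambda>i. - c i) x = - dotL l c x"
  by (simp add: dotL_def sum_negf)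

lemma RL_combL: "x \<in> RL l \<Longrightarrow> y \<in> RL l \<Longrightarrow> combL u x v y \<in> RL l"
  by (simp add: RL_def combL_def)

lemma polyL_combL:
  assumes "x \<in> polyL l H" "y \<in> polyL l H" "0 \<le> u" "0 \<le> v" "u + v = 1"
  shows "combL u x v y \<in> polyL l H"
proof -
  have "dotL l (fst k) (combL u x v y) \<le> snd k" if "k \<in> H" for k
  proof -
    have "u * dotL l (fst k) x \<le> u * snd k" "v * dotL l (fst k) y \<le> v * snd k"
      using assms that by (auto simp: polyL_def intro!: mult_left_mono)
    then show ?thesis
      using \<open>u + v = 1\<close> by (simp add: dotL_combL) (metis distrib_right add_mono mult_1)
  qed
  then show ?thesis using assms by (auto simp: polyL_def RL_combL)
qed

lemma relint_point_exists_for_subset: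
  assumes "finite J" "J \<subseteq> H" "polyL l H \<noteq> {}"
  shows "\<exists>p\<in>polyL l H. \<forall>k\<in>J. \<not> implicit_eqL l (polyL l H) k \<longrightarrow> dotL l (fst k) p < snd k"
  using assms
proof (induction J rule: finite_induct)
  case (insert k J)
  then obtain p where p: "p \<in> polyL l H"
    and p_strict: "\<forall>k\<in>J. \<not> implicit_eqL l (polyL l H) k \<longrightarrow> dotL l (fst k) p < snd k"
    by auto
  show ?case
  proof (cases "implicit_eqL l (polyL l H) k")
    case False
    then obtain q where q: "q \<in> polyL l H" "dotL l (fst k) q \<noteq> snd k"
      unfolding implicit_eqL_def by auto
    have "k \<in> H" using insert by auto
    with q have q_strict: "dotL l (fst k) q < snd k" unfolding polyL_def by force
    define m where "m = combL (1/2) p (1/2) q"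
    have "m \<in> polyL l H" unfolding m_def by (rule polyL_combL[OF p q(1)]) auto
    moreover have "dotL l (fst k') m < snd k'"
      if "k' \<in> insert k J" "\<not> implicit_eqL l (polyL l H) k'" for k'
    proof -
      have "k' \<in> H" using that insert by auto
      then have "dotL l (fst k') p \<le> snd k'" "dotL l (fst k') q \<le> snd k'"
        using p q unfolding polyL_def by auto
      moreover have "dotL l (fst k') p < snd k' \<or> dotL l (fst k') q < snd k'"
        using that p_strict q_strict by auto
      ultimately show ?thesis unfolding m_def dotL_combL by linarith
    qed
    ultimately show ?thesis by blast
  qed (use p p_strict in auto)
qed auto

lemma relint_point_exists:
  assumes "finite H" "polyL l H \<noteq> {}"
  obtains p where "p \<in> polyL l H"
    "\<And>k. k \<in> H \<Longrightarrow> \<not> implicit_eqL l (polyL l H) k \<Longrightarrow> dotL l (fst k) p < snd k"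
  using relint_point_exists_for_subset[OF assms(1) order_refl assms(2)] by blast

lemma polyL_extend_beyond:
  assumes H: "finite H" and p: "p \<in> polyL l H" and q: "q \<in> polyL l H"
    and tight: "\<And>k. k \<in> H \<Longrightarrow> dotL l (fst k) p = snd k \<Longrightarrow> dotL l (fst k) q = snd k"
  obtains t where "t > 0" "combL (1 + t) p (- t) q \<in> polyL l H"
proof -
  define z where "z t = combL (1 + t) p (- t) q" for t
  have "\<forall>\<^sub>F t in at_right 0. \<forall>k\<in>H. dotL l (fst k) (z t) \<le> snd k"
  proof (rule eventually_ball_finite[OF H], rule ballI)
    fix k assume k: "k \<in> H"
    show "\<forall>\<^sub>F t in at_right 0. dotL l (fst k) (z t) \<le> snd k"
    proof (cases "dotL l (fst k) p = snd k")
      case True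
      then have "dotL l (fst k) (z t) = snd k" for t
        using tight[OF k] unfolding z_def dotL_combL by (simp add: algebra_simps)
      then show ?thesis by simp
    next
      case False
      then have lt: "dotL l (fst k) p < snd k" using p k unfolding polyL_def by force
      have "((\<lambda>t. (1 + t) * dotL l (fst k) p + (- t) * dotL l (fst k) q) \<longlongrightarrow>
            (1 + 0) * dotL l (fst k) p + (- 0) * dotL l (fst k) q) (at_right 0)"
        by (intro tendsto_intros)
      then have "((\<lambda>t. dotL l (fst k) (z t)) \<longlongrightarrow> dotL l (fst k) p) (at_right 0)"
        unfolding z_def dotL_combL by simp
      from order_tendstoD(2)[OF this lt] show ?thesis
        by (rule eventually_mono) simp
    qed
  qed
  then obtain b where "b > 0" and b: "\<And>t. t > 0 \<Longrightarrow> t < b \<Longrightarrow> \<forall>k\<in>H. dotL l (fst k) (z t) \<le> snd k"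
    unfolding eventually_at_right_field by auto
  moreover have "z (b / 2) \<in> RL l" using p q unfolding z_def polyL_def by (auto intro: RL_combL)
  ultimately have "z (b / 2) \<in> polyL l H" using b[of "b / 2"] unfolding polyL_def by auto
  with \<open>b > 0\<close> show ?thesis using that[of "b / 2"] unfolding z_def by simp
qed

lemma face_eq_tight_set:
  assumes H: "finite H" and F: "faceL l F (polyL l H)" "F \<noteq> {}"
  shows "F = tight_set l (polyL l H) {k\<in>H. \<forall>y\<in>F. dotL l (fst k) y = snd k}"
proof -
  obtain c e where valid: "\<forall>x\<in>polyL l H. dotL l c x \<le> e" and F_eq: "F = {x\<in>polyL l H. dotL l c x = e}"
    using F(1) unfolding faceL_def by auto
  define HF where "HF = insert (c, e) (insert (\<lambda>i. - c i, - e) H)"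
  have F_poly: "F = polyL l HF"
    unfolding F_eq HF_def polyL_def using dotL_uminus[of l c] by auto
  obtain p where pF: "p \<in> F"
    and p_strict: "\<And>k. k \<in> HF \<Longrightarrow> \<not> implicit_eqL l F k \<Longrightarrow> dotL l (fst k) p < snd k"
    using relint_point_exists[of HF l] H F(2) F_poly unfolding HF_def by auto
  show ?thesis
  proof
    show "F \<subseteq> tight_set l (polyL l H) {k\<in>H. \<forall>y\<in>F. dotL l (fst k) y = snd k}"
      using F_eq unfolding tight_set_def by auto
  next
    show "tight_set l (polyL l H) {k\<in>H. \<forall>y\<in>F. dotL l (fst k) y = snd k} \<subseteq> F"
    proof
      fix q assume "q \<in> tight_set l (polyL l H) {k\<in>H. \<forall>y\<in>F. dotL l (fst k) y = snd k}"
      then have q: "q \<in> polyL l H"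
        and q_tight: "\<And>k. k \<in> H \<Longrightarrow> \<forall>y\<in>F. dotL l (fst k) y = snd k \<Longrightarrow> dotL l (fst k) q = snd k"
        unfolding tight_set_def by auto
      have p: "p \<in> polyL l H" and pe: "dotL l c p = e" using pF F_eq by auto
      have "dotL l (fst k) q = snd k" if "k \<in> H" "dotL l (fst k) p = snd k" for k
        using p_strict[of k] that q_tight[of k] unfolding HF_def implicit_eqL_def by auto
      then obtain t where "t > 0" "combL (1 + t) p (- t) q \<in> polyL l H"
        using polyL_extend_beyond[OF H p q] by blast
      then have "dotL l c (combL (1 + t) p (- t) q) \<le> e" using valid by blast
      then have "(1 + t) * e - t * dotL l c q \<le> e" unfolding dotL_combL pe by simp
      then have "e \<le> dotL l c q" using \<open>t > 0\<close> by (simp add: algebra_simps)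
      then show "q \<in> F" using valid q unfolding F_eq by (simp add: order_antisym)
    qed
  qed
qed

lemma finite_faces:
  assumes H: "finite H"
  shows "finite {F. faceL l F (polyL l H)}"
proof -
  have "{F. faceL l F (polyL l H)} \<subseteq> insert {} (tight_set l (polyL l H) ` Pow H)"
    using face_eq_tight_set[OF H] by blast
  then show ?thesis using H by (meson finite_Pow_iff finite_imageI finite_insert finite_subset)
qed

lemma finite_facets: "finite H \<Longrightarrow> finite {F. facetL l F (polyL l H)}"
  by (rule finite_subset[OF _ finite_faces]) (auto simp: facetL_def)

lemma tight_set_single_face: "k \<in> H \<Longrightarrow> faceL l (tight_set l (polyL l H) {k}) (polyL l H)"
  unfolding faceL_def tight_set_def polyL_def by auto

lemma facet_eq_tight_set:
  assumes H: "finite H" and F: "facetL l F (polyL l H)"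
  obtains k where "k \<in> H" "\<not> implicit_eqL l (polyL l H) k" "F = tight_set l (polyL l H) {k}"
proof -
  let ?Q = "polyL l H"
  have face: "faceL l F ?Q" and "F \<noteq> {}" "F \<noteq> ?Q" using F unfolding facetL_def by auto
  then have F_eq: "F = tight_set l ?Q {k\<in>H. \<forall>y\<in>F. dotL l (fst k) y = snd k}"
    using face_eq_tight_set[OF H] by blast
  have "\<exists>k. k \<in> H \<and> (\<forall>y\<in>F. dotL l (fst k) y = snd k) \<and> \<not> implicit_eqL l ?Q k"
  proof (rule ccontr)
    assume "\<nexists>k. k \<in> H \<and> (\<forall>y\<in>F. dotL l (fst k) y = snd k) \<and> \<not> implicit_eqL l ?Q k"
    then have "tight_set l ?Q {k\<in>H. \<forall>y\<in>F. dotL l (fst k) y = snd k} = ?Q"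
      unfolding tight_set_def implicit_eqL_def by blast
    with F_eq \<open>F \<noteq> ?Q\<close> show False by simp
  qed
  then obtain k where k: "k \<in> H" "\<forall>y\<in>F. dotL l (fst k) y = snd k" "\<not> implicit_eqL l ?Q k"
    by blast
  have "F \<subseteq> tight_set l ?Q {k}" using k face unfolding faceL_def tight_set_def by auto
  moreover have "tight_set l ?Q {k} \<noteq> ?Q" using k(3) unfolding tight_set_def implicit_eqL_def by auto
  ultimately have "tight_set l ?Q {k} = F"
    using F tight_set_single_face[OF k(1)] unfolding facetL_def by blast
  then show ?thesis using that k by auto
qed

lemma nfacets_le_card:
  assumes H: "finite H" and S: "finite S"
    and non_implicit: "\<And>k. k \<in> H \<Longrightarrow> \<not> implicit_eqL l (polyL l H) k \<Longrightarrow> k \<in> S"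
  shows "nfacets l (polyL l H) \<le> card S"
proof -
  have "{F. facetL l F (polyL l H)} \<subseteq> (\<lambda>k. tight_set l (polyL l H) {k}) ` S"
  proof
    fix F assume "F \<in> {F. facetL l F (polyL l H)}"
    then obtain k where "k \<in> H" "\<not> implicit_eqL l (polyL l H) k" "F = tight_set l (polyL l H) {k}"
      using facet_eq_tight_set[OF H] by blast
    then show "F \<in> (\<lambda>k. tight_set l (polyL l H) {k}) ` S" using non_implicit by blast
  qed
  then show ?thesis unfolding nfacets_def
    by (meson S card_image_le card_mono finite_imageI le_trans)
qed

lemma face_subset_facet:
  assumes H: "finite H" and G: "faceL l G (polyL l H)" "G \<noteq> {}" "G \<noteq> polyL l H"
  obtains F where "facetL l F (polyL l H)" "G \<subseteq> F"
proof -
  let ?S = "{G'. faceL l G' (polyL l H) \<and> G' \<noteq> polyL l H \<and> G \<subseteq> G'}"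
  have "finite ?S" using finite_faces[OF H] by (rule finite_subset[rotated]) auto
  moreover have "?S \<noteq> {}" using G by auto
  ultimately obtain F where F: "F \<in> ?S" and F_max: "\<forall>G'\<in>?S. F \<subseteq> G' \<longrightarrow> F = G'"
    by (meson finite_has_maximal)
  have "facetL l F (polyL l H)"
    unfolding facetL_def
  proof (intro conjI allI impI)
    show "faceL l F (polyL l H)" "F \<noteq> polyL l H" "F \<noteq> {}" using F G(2) by auto
    show "G' = F" if "faceL l G' (polyL l H) \<and> G' \<noteq> polyL l H \<and> F \<subseteq> G'" for G'
      using that F F_max by blast
  qed
  then show ?thesis using that F by blast
qed

lemma polyL_antimono: "H' \<subseteq> H \<Longrightarrow> polyL l H \<subseteq> polyL l H'"
  unfolding polyL_def by auto

lemma segment_le_iff: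
  fixes P X e t :: real
  assumes "P < e" "e < X"
  shows "(1 - t) * P + t * X \<le> e \<longleftrightarrow> t \<le> (e - P) / (X - P)"
    and "(1 - t) * P + t * X = e \<longleftrightarrow> t = (e - P) / (X - P)"
  using assms by (auto simp: field_simps)

lemma exit_point:
  assumes H: "finite H" and p: "p \<in> polyL l H"
    and p_strict: "\<And>k. k \<in> H \<Longrightarrow> \<not> implicit_eqL l (polyL l H) k \<Longrightarrow> dotL l (fst k) p < snd k"
    and x: "x \<in> RL l" "x \<notin> polyL l H"
    and x_implicit: "\<And>k. k \<in> H \<Longrightarrow> implicit_eqL l (polyL l H) k \<Longrightarrow> dotL l (fst k) x \<le> snd k"
  obtains t k where "0 < t" "t < 1" "k \<in> H" "\<not> implicit_eqL l (polyL l H) k"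
    "combL (1 - t) p t x \<in> polyL l H" "dotL l (fst k) (combL (1 - t) p t x) = snd k"
proof -
  define V where "V = {k\<in>H. snd k < dotL l (fst k) x}"
  have "V \<noteq> {}" using x unfolding V_def polyL_def by force
  have "finite V" using H unfolding V_def by auto
  have V_cross: "dotL l (fst k) p < snd k" "snd k < dotL l (fst k) x" if "k \<in> V" for k
    using that x_implicit p_strict unfolding V_def by force+
  define s where "s k = (snd k - dotL l (fst k) p) / (dotL l (fst k) x - dotL l (fst k) p)" for k
  define t where "t = Min (s ` V)"
  have "t \<in> s ` V" unfolding t_def using \<open>finite V\<close> \<open>V \<noteq> {}\<close> by (intro Min_in) auto
  then obtain k where k: "k \<in> V" "t = s k" by auto
  have t_le: "t \<le> s k'" if "k' \<in> V" for k'
    unfolding t_def using \<open>finite V\<close> that by auto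
  have "0 < t" "t < 1"
    using V_cross[OF k(1)] unfolding k(2) s_def by (auto simp: field_simps)
  define y where "y = combL (1 - t) p t x"
  have "dotL l (fst k') y \<le> snd k'" if "k' \<in> H" for k'
  proof (cases "k' \<in> V")
    case True
    show ?thesis
      unfolding y_def dotL_combL segment_le_iff(1)[OF V_cross[OF True]]
      using t_le[OF True] unfolding s_def .
  next
    case False
    then have "dotL l (fst k') x \<le> snd k'" "dotL l (fst k') p \<le> snd k'"
      using that p unfolding V_def polyL_def by auto
    then have "(1 - t) * dotL l (fst k') p + t * dotL l (fst k') x \<le> (1 - t) * snd k' + t * snd k'"
      using \<open>0 < t\<close> \<open>t < 1\<close> by (intro add_mono mult_left_mono) auto
    then show ?thesis unfolding y_def dotL_combL by (simp add: algebra_simps)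
  qed
  moreover have "y \<in> RL l" using p x unfolding y_def polyL_def by (auto intro: RL_combL)
  ultimately have "y \<in> polyL l H" unfolding polyL_def by auto
  moreover have "dotL l (fst k) y = snd k"
    unfolding y_def dotL_combL segment_le_iff(2)[OF V_cross[OF k(1)]] k(2) s_def ..
  moreover have "k \<in> H" and "\<not> implicit_eqL l (polyL l H) k"
    using k(1) x_implicit[of k] unfolding V_def by auto
  ultimately show ?thesis using that \<open>0 < t\<close> \<open>t < 1\<close> unfolding y_def by blast
qed

lemma mem_polyL_if_facet_inequalities:
  assumes H: "finite H" and x: "x \<in> RL l"
    and x_implicit: "\<And>k. k \<in> H \<Longrightarrow> implicit_eqL l (polyL l H) k \<Longrightarrow> dotL l (fst k) x \<le> snd k"
    and x_facets: "\<And>F. facetL l F (polyL l H) \<Longrightarrow> \<exists>k\<in>H. \<not> implicit_eqL l (polyL l H) k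
                   \<and> F = tight_set l (polyL l H) {k} \<and> dotL l (fst k) x \<le> snd k"
  shows "x \<in> polyL l H"
proof (rule ccontr)
  let ?Q = "polyL l H"
  assume x_out: "x \<notin> ?Q"
  have "?Q \<noteq> {}"
  proof
    assume "?Q = {}"
    then have "dotL l (fst k) x \<le> snd k" if "k \<in> H" for k
      using x_implicit[OF that] unfolding implicit_eqL_def by simp
    with x x_out show False unfolding polyL_def by blast
  qed
  then obtain p where p: "p \<in> ?Q"
    and p_strict: "\<And>k. k \<in> H \<Longrightarrow> \<not> implicit_eqL l ?Q k \<Longrightarrow> dotL l (fst k) p < snd k"
    using relint_point_exists[OF H] by blast
  obtain t k where t: "0 < t" "t < 1" and k: "k \<in> H" "\<not> implicit_eqL l ?Q k"
    and y: "combL (1 - t) p t x \<in> ?Q" "dotL l (fst k) (combL (1 - t) p t x) = snd k"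
    using exit_point[OF H p p_strict x x_out x_implicit] by blast
  have "tight_set l ?Q {k} \<noteq> ?Q"
  proof
    assume "tight_set l ?Q {k} = ?Q"
    with p have "dotL l (fst k) p = snd k" unfolding tight_set_def by blast
    with p_strict[OF k] show False by simp
  qed
  moreover have "tight_set l ?Q {k} \<noteq> {}" using y unfolding tight_set_def by auto
  ultimately obtain F where F: "facetL l F ?Q" "tight_set l ?Q {k} \<subseteq> F"
    using face_subset_facet[OF H tight_set_single_face[OF k(1)]] by blast
  then obtain k' where k': "k' \<in> H" "\<not> implicit_eqL l ?Q k'" "F = tight_set l ?Q {k'}"
    and x_k': "dotL l (fst k') x \<le> snd k'"
    using x_facets by blast
  have "combL (1 - t) p t x \<in> F" using F(2) y unfolding tight_set_def by blast
  then have "dotL l (fst k') (combL (1 - t) p t x) = snd k'" using k'(3) unfolding tight_set_def by blast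
  moreover have "(1 - t) * dotL l (fst k') p < (1 - t) * snd k'" "t * dotL l (fst k') x \<le> t * snd k'"
    using p_strict[OF k'(1,2)] x_k' t by (auto intro: mult_left_mono)
  ultimately show False unfolding dotL_combL by (simp add: algebra_simps)
qed

lemma polyL_facet_description:
  assumes H: "finite H"
  obtains H0 H1 where "finite H0" "finite H1" "\<And>k. k \<in> H0 \<Longrightarrow> implicit_eqL l (polyL l H) k"
    "card H1 \<le> nfacets l (polyL l H)" "polyL l H = polyL l (H0 \<union> H1)"
proof -
  let ?Q = "polyL l H"
  define H0 where "H0 = {k\<in>H. implicit_eqL l ?Q k}"
  define g where "g F = (SOME k. k \<in> H \<and> \<not> implicit_eqL l ?Q k \<and> F = tight_set l ?Q {k})" for F
  have g: "g F \<in> H \<and> \<not> implicit_eqL l ?Q (g F) \<and> F = tight_set l ?Q {g F}" if "facetL l F ?Q" for F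
  proof -
    have "\<exists>k. k \<in> H \<and> \<not> implicit_eqL l ?Q k \<and> F = tight_set l ?Q {k}"
      using facet_eq_tight_set[OF H that] by metis
    then show ?thesis unfolding g_def by (rule someI_ex)
  qed
  define H1 where "H1 = g ` {F. facetL l F ?Q}"
  have "?Q \<subseteq> polyL l (H0 \<union> H1)" using g unfolding H0_def H1_def by (intro polyL_antimono) blast
  moreover have "x \<in> ?Q" if x: "x \<in> polyL l (H0 \<union> H1)" for x
  proof (rule mem_polyL_if_facet_inequalities[OF H])
    show "x \<in> RL l" using x unfolding polyL_def by auto
    show "dotL l (fst k) x \<le> snd k" if "k \<in> H" "implicit_eqL l ?Q k" for k
      using x that unfolding polyL_def H0_def by auto
    show "\<exists>k\<in>H. \<not> implicit_eqL l ?Q k \<and> F = tight_set l ?Q {k} \<and> dotL l (fst k) x \<le> snd k"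
      if "facetL l F ?Q" for F
      using g[OF that] x that unfolding H1_def polyL_def by blast
  qed
  moreover have "card H1 \<le> nfacets l ?Q"
    unfolding H1_def nfacets_def by (rule card_image_le[OF finite_facets[OF H]])
  moreover have "finite H0" "finite H1"
    using H finite_facets[OF H] unfolding H0_def H1_def by auto
  ultimately show ?thesis using that H0_def by blast
qed

section \<open>Projections of polyhedra are polyhedra\<close>

text \<open>Constraints \<open>(c, v, e)\<close> read \<open>dotL m c z + v \<bullet> y \<le> e\<close> in the variables \<open>(z, y)\<close>; the set below is
  the projection onto \<open>y\<close>.\<close>
definition proj_polyL :: "nat \<Rightarrow> ((nat \<Rightarrow> real) \<times> (real ^ 'd) \<times> real) set \<Rightarrow> (real ^ 'd) set" where
  "proj_polyL m E = {y. \<exists>z\<in>RL m. \<forall>k\<in>E. dotL m (fst k) z + fst (snd k) \<bullet> y \<le> snd (snd k)}"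

definition slack :: "nat \<Rightarrow> (nat \<Rightarrow> real) \<times> (real ^ 'd) \<times> real \<Rightarrow> (nat \<Rightarrow> real) \<Rightarrow> real ^ 'd \<Rightarrow> real" where
  "slack m k z y = snd (snd k) - fst (snd k) \<bullet> y - dotL m (fst k) z"

definition fm_combine :: "nat \<Rightarrow> (nat \<Rightarrow> real) \<times> (real ^ 'd) \<times> real
    \<Rightarrow> (nat \<Rightarrow> real) \<times> (real ^ 'd) \<times> real \<Rightarrow> (nat \<Rightarrow> real) \<times> (real ^ 'd) \<times> real" where
  "fm_combine m p n =
    ((\<lambda>i. - fst n m * fst p i + fst p m * fst n i),
     (- fst n m) *\<^sub>R fst (snd p) + fst p m *\<^sub>R fst (snd n),
     - fst n m * snd (snd p) + fst p m * snd (snd n))"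

definition fm_eliminate :: "nat \<Rightarrow> ((nat \<Rightarrow> real) \<times> (real ^ 'd) \<times> real) set
    \<Rightarrow> ((nat \<Rightarrow> real) \<times> (real ^ 'd) \<times> real) set" where
  "fm_eliminate m E = {k\<in>E. fst k m = 0} \<union>
     (\<lambda>(p, n). fm_combine m p n) ` ({k\<in>E. 0 < fst k m} \<times> {k\<in>E. fst k m < 0})"

lemma proj_polyL_iff_slack: "proj_polyL m E = {y. \<exists>z\<in>RL m. \<forall>k\<in>E. 0 \<le> slack m k z y}"
  unfolding proj_polyL_def slack_def by (simp add: algebra_simps)

lemma dotL_lincomb: "dotL m (\<lambda>i. \<alpha> * c i + \<beta> * d i) z = \<alpha> * dotL m c z + \<beta> * dotL m d z"
  by (simp add: dotL_def algebra_simps sum.distrib sum_distrib_left)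

lemma slack_fm_combine:
  "slack m (fm_combine m p n) z y = - fst n m * slack m p z y + fst p m * slack m n z y"
  unfolding slack_def fm_combine_def fst_conv snd_conv dotL_lincomb inner_add_left inner_scaleR_left
  by (simp add: algebra_simps)

lemma slack_Suc_upd: "slack (Suc m) k (z(m := t)) y = slack m k z y - fst k m * t"
  by (simp add: slack_def dotL_def)

lemma finite_fm_eliminate: "finite E \<Longrightarrow> finite (fm_eliminate m E)"
  unfolding fm_eliminate_def by auto

lemma finite_interpolation:
  fixes U L :: "'a \<Rightarrow> real"
  assumes "finite A" "finite B" "\<And>a b. a \<in> A \<Longrightarrow> b \<in> B \<Longrightarrow> L b \<le> U a"
  obtains t where "\<And>a. a \<in> A \<Longrightarrow> t \<le> U a" "\<And>b. b \<in> B \<Longrightarrow> L b \<le> t"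
proof (cases "B = {}")
  case True
  show ?thesis by (rule that[of "Min (U ` A)"]) (use True assms(1) in auto)
next
  case False
  have "Max (L ` B) \<in> L ` B" using assms(2) False by (intro Max_in) auto
  then show ?thesis using assms by (intro that[of "Max (L ` B)"]) auto
qed

lemma proj_polyL_Suc_subset: "proj_polyL (Suc m) E \<subseteq> proj_polyL m (fm_eliminate m E)"
proof
  fix y assume "y \<in> proj_polyL (Suc m) E"
  then obtain z where z: "z \<in> RL (Suc m)" and z_ok: "\<And>k. k \<in> E \<Longrightarrow> 0 \<le> slack (Suc m) k z y"
    unfolding proj_polyL_iff_slack by auto
  define z' where "z' = z(m := 0)"
  have "z = z'(m := z m)" unfolding z'_def by simp
  then have bound: "fst k m * z m \<le> slack m k z' y" if "k \<in> E" for k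
    using z_ok[OF that] slack_Suc_upd[of m k z' "z m" y] by simp
  have "0 \<le> slack m k z' y" if "k \<in> fm_eliminate m E" for k
    using that unfolding fm_eliminate_def
  proof (elim UnE CollectE imageE conjE)
    show "0 \<le> slack m k z' y" if "k \<in> E" "fst k m = 0" using bound[of k] that by simp
  next
    fix pn assume "k = (\<lambda>(p, n). fm_combine m p n) pn"
      and "pn \<in> {k \<in> E. 0 < fst k m} \<times> {k \<in> E. fst k m < 0}"
    then obtain p n where k: "k = fm_combine m p n" and pn: "p \<in> E" "n \<in> E" "0 < fst p m" "fst n m < 0"
      by auto
    have "- fst n m * (fst p m * z m) \<le> - fst n m * slack m p z' y"
      "fst p m * (fst n m * z m) \<le> fst p m * slack m n z' y"
      using bound pn by (auto intro!: mult_left_mono)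
    then show "0 \<le> slack m k z' y" unfolding k slack_fm_combine by (simp add: algebra_simps)
  qed
  moreover have "z' \<in> RL m" using z unfolding z'_def RL_def by auto
  ultimately show "y \<in> proj_polyL m (fm_eliminate m E)" unfolding proj_polyL_iff_slack by blast
qed

lemma proj_polyL_Suc_supset:
  assumes "finite E"
  shows "proj_polyL m (fm_eliminate m E) \<subseteq> proj_polyL (Suc m) E"
proof
  fix y assume "y \<in> proj_polyL m (fm_eliminate m E)"
  then obtain z where z: "z \<in> RL m" and z_ok: "\<And>k. k \<in> fm_eliminate m E \<Longrightarrow> 0 \<le> slack m k z y"
    unfolding proj_polyL_iff_slack by auto
  define Pos where "Pos = {k\<in>E. 0 < fst k m}"
  define Neg where "Neg = {k\<in>E. fst k m < 0}"
  define ratio where "ratio k = slack m k z y / fst k m" for k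
  have ratio_le: "ratio n \<le> ratio p" if "p \<in> Pos" "n \<in> Neg" for p n
  proof -
    have "fm_combine m p n \<in> fm_eliminate m E"
      using that unfolding fm_eliminate_def Pos_def Neg_def by auto
    then have "0 \<le> - fst n m * slack m p z y + fst p m * slack m n z y"
      using z_ok slack_fm_combine by metis
    then show ?thesis
      using that unfolding ratio_def Pos_def Neg_def by (auto simp: field_simps)
  qed
  have "finite Pos" "finite Neg" using assms unfolding Pos_def Neg_def by auto
  then obtain t where t: "\<And>p. p \<in> Pos \<Longrightarrow> t \<le> ratio p" "\<And>n. n \<in> Neg \<Longrightarrow> ratio n \<le> t"
    using finite_interpolation[of Pos Neg ratio ratio] ratio_le by blast
  have "0 \<le> slack (Suc m) k (z(m := t)) y" if k: "k \<in> E" for k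
  proof -
    consider "fst k m = 0" | "0 < fst k m" | "fst k m < 0" by linarith
    then have "fst k m * t \<le> slack m k z y"
    proof cases
      case 1
      then show ?thesis using z_ok[of k] k unfolding fm_eliminate_def by auto
    next
      case 2
      then show ?thesis using t(1)[of k] k unfolding Pos_def ratio_def by (auto simp: field_simps)
    next
      case 3
      then show ?thesis using t(2)[of k] k unfolding Neg_def ratio_def by (auto simp: field_simps)
    qed
    then show ?thesis unfolding slack_Suc_upd by simp
  qed
  moreover have "z(m := t) \<in> RL (Suc m)" using z unfolding RL_def by auto
  ultimately show "y \<in> proj_polyL (Suc m) E" unfolding proj_polyL_iff_slack by blast
qed

lemma polyhedron_proj_polyL: "finite E \<Longrightarrow> polyhedron (proj_polyL m E)"
proof (induction m arbitrary: E)
  case 0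
  have "proj_polyL 0 E = (\<Inter>k\<in>E. {y. fst (snd k) \<bullet> y \<le> snd (snd k)})"
    unfolding proj_polyL_def RL_def by (auto simp: dotL_def)
  then show ?case using 0 by (auto intro!: polyhedron_Inter polyhedron_halfspace_le)
next
  case (Suc m)
  then have "proj_polyL (Suc m) E = proj_polyL m (fm_eliminate m E)"
    using proj_polyL_Suc_subset proj_polyL_Suc_supset by blast
  then show ?case using Suc finite_fm_eliminate by metis
qed

lemma affmap_nth: "affmap l a b x $ i = b $ i + dotL l (\<lambda>j. a j $ i) x"
  by (simp add: affmap_def dotL_def mult.commute)

lemma polyhedron_affmap_image:
  fixes a :: "nat \<Rightarrow> real ^ 'd"
  assumes "finite H"
  shows "polyhedron (affmap m a b ` polyL m H)"
proof -
  define E where "E = (\<lambda>k. (fst k, 0 :: real ^ 'd, snd k)) ` H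
      \<union> (\<lambda>i. (\<lambda>j. - (a j $ i), axis i 1, b $ i)) ` UNIV
      \<union> (\<lambda>i. (\<lambda>j. a j $ i, - axis i 1, - b $ i)) ` UNIV"
  have graph: "y = affmap m a b z \<longleftrightarrow>
      (\<forall>i. dotL m (\<lambda>j. - (a j $ i)) z + axis i 1 \<bullet> y \<le> b $ i \<and>
           dotL m (\<lambda>j. a j $ i) z + (- axis i 1) \<bullet> y \<le> - b $ i)" for y z
  proof -
    have "y = affmap m a b z \<longleftrightarrow> (\<forall>i. y $ i = b $ i + dotL m (\<lambda>j. a j $ i) z)"
      by (simp add: vec_eq_iff affmap_nth)
    also have "\<dots> \<longleftrightarrow> (\<forall>i. dotL m (\<lambda>j. - (a j $ i)) z + axis i 1 \<bullet> y \<le> b $ i \<and>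
           dotL m (\<lambda>j. a j $ i) z + (- axis i 1) \<bullet> y \<le> - b $ i)"
      by (intro all_cong1) (auto simp: dotL_uminus inner_axis')
    finally show ?thesis .
  qed
  have "y \<in> affmap m a b ` polyL m H \<longleftrightarrow> y \<in> proj_polyL m E" for y
  proof -
    have "y \<in> affmap m a b ` polyL m H \<longleftrightarrow>
        (\<exists>z\<in>RL m. (\<forall>k\<in>H. dotL m (fst k) z \<le> snd k) \<and> y = affmap m a b z)"
      unfolding polyL_def by blast
    also have "\<dots> \<longleftrightarrow> y \<in> proj_polyL m E"
      unfolding graph proj_polyL_def E_def by (simp add: ball_Un all_conj_distrib)
    finally show ?thesis .
  qed
  then have "affmap m a b ` polyL m H = proj_polyL m E" by blast
  moreover have "finite E" using assms unfolding E_def by auto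
  ultimately show ?thesis using polyhedron_proj_polyL by metis
qed

section \<open>The dominant hull of a projection\<close>

definition orthant :: "(real ^ 'd) set" where
  "orthant = {x. \<forall>i. 0 \<le> x $ i}"

lemma up_eq: "up P = {p + v | p v. p \<in> P \<and> v \<in> orthant}"
  unfolding up_def orthant_def by blast

definition truncL :: "nat \<Rightarrow> (nat \<Rightarrow> real) \<Rightarrow> nat \<Rightarrow> real" where
  "truncL l z = (\<lambda>i. if i < l then z i else 0)"

lemma sum_lessThan_add: "(\<Sum>i<l + n. f i) = (\<Sum>i<l. f i) + (\<Sum>j<n. f (l + j))"
  for f :: "nat \<Rightarrow> 'a::comm_monoid_add"
  by (induction n) (auto simp: add.assoc)

lemma dotL_truncL_left: "dotL (l + n) (truncL l c) z = dotL l c z"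
  by (simp add: dotL_def truncL_def sum_lessThan_add)

lemma dotL_truncL_right: "dotL l c (truncL l z) = dotL l c z"
  by (simp add: dotL_def truncL_def)

lemma truncL_in_RL: "truncL l z \<in> RL l"
  by (simp add: RL_def truncL_def)

lemma affmap_truncL: "affmap l a b (truncL l z) = affmap l a b z"
  by (simp add: affmap_def truncL_def)

text \<open>Inequalities in \<open>l + n\<close> variables describing \<open>x \<in> polyL l H\<close>, \<open>affmap l a b x \<ge> 0\<close> and \<open>w \<ge> 0\<close>,
  where \<open>x\<close> and \<open>w\<close> are the first \<open>l\<close> and the last \<open>n\<close> variables.\<close>
definition ext_constraints :: "nat \<Rightarrow> nat \<Rightarrow> (nat \<Rightarrow> real ^ 'd) \<Rightarrow> real ^ 'd
    \<Rightarrow> ((nat \<Rightarrow> real) \<times> real) set \<Rightarrow> ((nat \<Rightarrow> real) \<times> real) set" where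
  "ext_constraints l n a b H =
     (\<lambda>k. (truncL l (fst k), snd k)) ` H
     \<union> (\<lambda>i. (\<lambda>j. if j < l then - (a j $ i) else 0, b $ i)) ` UNIV
     \<union> (\<lambda>j. (\<lambda>i. if i = l + j then - 1 else 0, 0)) ` {..<n}"

definition ext_map :: "nat \<Rightarrow> (nat \<Rightarrow> 'd) \<Rightarrow> (nat \<Rightarrow> real ^ 'd) \<Rightarrow> nat \<Rightarrow> real ^ 'd" where
  "ext_map l g a = (\<lambda>i. if i < l then a i else axis (g (i - l)) 1)"

lemma finite_ext_constraints: "finite H \<Longrightarrow> finite (ext_constraints l n a b H)"
  unfolding ext_constraints_def by auto

lemma mem_polyL_ext_constraints:
  "z \<in> polyL (l + n) (ext_constraints l n a b H) \<longleftrightarrow>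
     z \<in> RL (l + n) \<and> truncL l z \<in> polyL l H \<and> affmap l a b z \<in> orthant \<and> (\<forall>j<n. 0 \<le> z (l + j))"
proof -
  have pos: "dotL (l + n) (\<lambda>j. if j < l then - (a j $ i) else 0) z = b $ i - affmap l a b z $ i" for i
    by (simp add: dotL_def affmap_nth sum_lessThan_add sum_negf)
  have w: "dotL (l + n) (\<lambda>i. if i = l + j then - 1 else 0) z = - z (l + j)" if "j < n" for j
    using that by (simp add: dotL_def sum_lessThan_add if_distrib[of "\<lambda>x. x * _"] sum.delta cong: if_cong)
  show ?thesis
    unfolding polyL_def ext_constraints_def orthant_def
    by (auto simp: ball_Un dotL_truncL_left dotL_truncL_right truncL_in_RL pos w)
qed

lemma affmap_ext_map:
  "affmap (l + n) (ext_map l g a) b z = affmap l a b z + (\<Sum>j<n. z (l + j) *\<^sub>R axis (g j) 1)"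
  by (simp add: affmap_def ext_map_def sum_lessThan_add)

lemma image_polyL_ext_constraints:
  fixes a :: "nat \<Rightarrow> real ^ 'd"
  assumes g: "bij_betw g {..<n} (UNIV :: 'd set)"
  shows "affmap (l + n) (ext_map l g a) b ` polyL (l + n) (ext_constraints l n a b H)
    = up (affmap l a b ` polyL l H \<inter> orthant)"
proof
  show "affmap (l + n) (ext_map l g a) b ` polyL (l + n) (ext_constraints l n a b H)
    \<subseteq> up (affmap l a b ` polyL l H \<inter> orthant)"
  proof
    fix y assume "y \<in> affmap (l + n) (ext_map l g a) b ` polyL (l + n) (ext_constraints l n a b H)"
    then obtain z where z: "z \<in> polyL (l + n) (ext_constraints l n a b H)"
      and y: "y = affmap l a b (truncL l z) + (\<Sum>j<n. z (l + j) *\<^sub>R axis (g j) 1)"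
      by (auto simp: affmap_ext_map affmap_truncL)
    have "(\<Sum>j<n. z (l + j) *\<^sub>R axis (g j) 1) \<in> orthant"
      using z unfolding mem_polyL_ext_constraints orthant_def by (auto simp: axis_def intro!: sum_nonneg)
    moreover have "affmap l a b (truncL l z) \<in> affmap l a b ` polyL l H \<inter> orthant"
      using z unfolding mem_polyL_ext_constraints by (metis IntI affmap_truncL imageI)
    ultimately show "y \<in> up (affmap l a b ` polyL l H \<inter> orthant)" unfolding up_eq y by blast
  qed
next
  show "up (affmap l a b ` polyL l H \<inter> orthant)
    \<subseteq> affmap (l + n) (ext_map l g a) b ` polyL (l + n) (ext_constraints l n a b H)"
  proof
    fix y assume "y \<in> up (affmap l a b ` polyL l H \<inter> orthant)"
    then obtain x w where x: "x \<in> polyL l H" "affmap l a b x \<in> orthant"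
      and w: "w \<in> orthant" and y: "y = affmap l a b x + w"
      unfolding up_eq by blast
    define z where "z i = (if i < l then x i else if i < l + n then w $ g (i - l) else 0)" for i
    have "truncL l z = x" using x(1) unfolding z_def truncL_def polyL_def RL_def by auto
    moreover have "(\<Sum>j<n. z (l + j) *\<^sub>R axis (g j) 1) = w"
    proof -
      have "(\<Sum>j<n. z (l + j) *\<^sub>R axis (g j) 1) = (\<Sum>j<n. w $ g j *\<^sub>R axis (g j) (1::real))"
        unfolding z_def by simp
      also have "\<dots> = (\<Sum>i\<in>UNIV. w $ i *\<^sub>R axis i 1)" using sum.reindex_bij_betw[OF g] .
      also have "\<dots> = w" using basis_expansion[of w] by (simp add: scalar_mult_eq_scaleR)
      finally show ?thesis .
    qed
    moreover have "z \<in> RL (l + n)" unfolding z_def RL_def by auto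
    ultimately have "z \<in> polyL (l + n) (ext_constraints l n a b H)" "affmap (l + n) (ext_map l g a) b z = y"
      using x w unfolding mem_polyL_ext_constraints affmap_ext_map y orthant_def
      by (auto simp: affmap_truncL[of l a b z, symmetric] z_def)
    then show "y \<in> affmap (l + n) (ext_map l g a) b ` polyL (l + n) (ext_constraints l n a b H)" by blast
  qed
qed

lemma nfacets_polyL_ext_constraints:
  fixes a :: "nat \<Rightarrow> real ^ 'd"
  assumes "finite H0" "finite H1" and H0: "\<And>k. k \<in> H0 \<Longrightarrow> implicit_eqL l (polyL l (H0 \<union> H1)) k"
  shows "nfacets (l + n) (polyL (l + n) (ext_constraints l n a b (H0 \<union> H1))) \<le> card H1 + CARD('d) + n"
proof -
  let ?lift = "\<lambda>k. (truncL l (fst k), snd k)"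
  let ?Hpos = "(\<lambda>i. (\<lambda>j. if j < l then - (a j $ i) else 0, b $ i)) ` (UNIV :: 'd set)"
  let ?Hw = "(\<lambda>j. (\<lambda>i. if i = l + j then - 1 else 0 :: real, 0 :: real)) ` {..<n}"
  let ?Q' = "polyL (l + n) (ext_constraints l n a b (H0 \<union> H1))"
  have "implicit_eqL (l + n) ?Q' (?lift k)" if k: "k \<in> H0" for k
  proof -
    have "dotL (l + n) (truncL l (fst k)) z = snd k" if "z \<in> ?Q'" for z
    proof -
      have "truncL l z \<in> polyL l (H0 \<union> H1)" using that unfolding mem_polyL_ext_constraints by blast
      then have "dotL l (fst k) (truncL l z) = snd k" using H0[OF k] unfolding implicit_eqL_def by blast
      then show ?thesis by (simp add: dotL_truncL_left dotL_truncL_right)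
    qed
    then show ?thesis unfolding implicit_eqL_def by simp
  qed
  then have "nfacets (l + n) ?Q' \<le> card (?lift ` H1 \<union> ?Hpos \<union> ?Hw)"
    using assms(1,2) by (intro nfacets_le_card finite_ext_constraints) (auto simp: ext_constraints_def)
  also have "\<dots> \<le> card (?lift ` H1) + card ?Hpos + card ?Hw"
    using card_Un_le[of "?lift ` H1 \<union> ?Hpos" ?Hw] card_Un_le[of "?lift ` H1" ?Hpos] by linarith
  also have "\<dots> \<le> card H1 + CARD('d) + n"
    using card_image_le[OF assms(2), of ?lift] card_image_le[of "UNIV :: 'd set"] card_image_le[of "{..<n}"]
    by (intro add_mono) auto
  finally show ?thesis .
qed

lemma xc_le_nfacets: "polyhedronL l Q \<Longrightarrow> xc (affmap l a b ` Q) \<le> nfacets l Q"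
  unfolding xc_def Inf_nat_def by (rule Least_le) blast

lemma xc_empty: "xc ({} :: (real ^ 'd) set) = 0"
proof -
  let ?Q = "polyL 0 {(\<lambda>_. 0, - 1)}"
  have "?Q = {}" unfolding polyL_def by (auto simp: dotL_def)
  moreover have "polyhedronL 0 ?Q" unfolding polyhedronL_iff_polyL by blast
  ultimately have "xc ({} :: (real ^ 'd) set) \<le> nfacets 0 ?Q" using xc_le_nfacets by fastforce
  moreover have "{F. facetL 0 F ?Q} = {}" using \<open>?Q = {}\<close> unfolding facetL_def faceL_def by auto
  ultimately show ?thesis unfolding nfacets_def by simp
qed

lemma dominant_hull_polyhedron_xc:
  fixes a :: "nat \<Rightarrow> real ^ 'd"
  assumes "polyhedronL l Q"
  shows "polyhedron (up (affmap l a b ` Q \<inter> orthant))"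
    and "xc (up (affmap l a b ` Q \<inter> orthant)) \<le> nfacets l Q + 2 * CARD('d)"
proof -
  obtain H where H: "finite H" "Q = polyL l H" using assms unfolding polyhedronL_iff_polyL by blast
  obtain H0 H1 where fin: "finite H0" "finite H1"
    and H0: "\<And>k. k \<in> H0 \<Longrightarrow> implicit_eqL l (polyL l H) k"
    and H1: "card H1 \<le> nfacets l (polyL l H)" and HH: "polyL l H = polyL l (H0 \<union> H1)"
    using polyL_facet_description[OF H(1), of l] by blast
  have Q: "Q = polyL l (H0 \<union> H1)" using H(2) HH by simp
  obtain g :: "nat \<Rightarrow> 'd" where "bij_betw g {0..<CARD('d)} UNIV"
    using ex_bij_betw_nat_finite[OF finite_class.finite_UNIV] by blast
  then have g: "bij_betw g {..<CARD('d)} UNIV" by (simp add: atLeast0LessThan)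
  let ?n = "CARD('d)"
  let ?Q' = "polyL (l + ?n) (ext_constraints l ?n a b (H0 \<union> H1))"
  have K: "up (affmap l a b ` Q \<inter> orthant) = affmap (l + ?n) (ext_map l g a) b ` ?Q'"
    unfolding Q by (rule image_polyL_ext_constraints[OF g, symmetric])
  have fin': "finite (ext_constraints l ?n a b (H0 \<union> H1))"
    using fin by (simp add: finite_ext_constraints)
  then show "polyhedron (up (affmap l a b ` Q \<inter> orthant))"
    unfolding K by (rule polyhedron_affmap_image)
  from fin' have "polyhedronL (l + ?n) ?Q'" unfolding polyhedronL_iff_polyL by blast
  then have "xc (up (affmap l a b ` Q \<inter> orthant)) \<le> nfacets (l + ?n) ?Q'"
    unfolding K by (rule xc_le_nfacets)
  also have "\<dots> \<le> card H1 + ?n + ?n"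
    using H0 HH by (intro nfacets_polyL_ext_constraints[OF fin]) simp
  finally have "xc (up (affmap l a b ` Q \<inter> orthant)) \<le> card H1 + 2 * ?n" by simp
  moreover have "card H1 \<le> nfacets l Q" using H1 H(2) by simp
  ultimately show "xc (up (affmap l a b ` Q \<inter> orthant)) \<le> nfacets l Q + 2 * ?n" by linarith
qed

section \<open>Dominant sets and relative distance\<close>

lemma up_mono: "A \<subseteq> B \<Longrightarrow> up A \<subseteq> up B"
  unfolding up_def by blast

lemma subset_up: "P \<subseteq> up P"
  unfolding up_def by force

lemma up_scaleR_up:
  assumes "0 < t"
  shows "up ((\<lambda>x. t *\<^sub>R x) ` up P) = (\<lambda>x. t *\<^sub>R x) ` up P"
proof
  show "up ((\<lambda>x. t *\<^sub>R x) ` up P) \<subseteq> (\<lambda>x. t *\<^sub>R x) ` up P"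
  proof
    fix y assume "y \<in> up ((\<lambda>x. t *\<^sub>R x) ` up P)"
    then obtain p v w where y: "y = t *\<^sub>R (p + v) + w" and "p \<in> P" "v \<in> orthant" "w \<in> orthant"
      unfolding up_eq by blast
    then have "p + (v + (1 / t) *\<^sub>R w) \<in> up P" using assms unfolding up_eq orthant_def by fastforce
    moreover have "y = t *\<^sub>R (p + (v + (1 / t) *\<^sub>R w))" using y assms by (simp add: algebra_simps)
    ultimately show "y \<in> (\<lambda>x. t *\<^sub>R x) ` up P" by blast
  qed
qed (rule subset_up)

lemma cube_eq_cbox: "{x. \<forall>i. 0 \<le> x $ i \<and> x $ i \<le> 1} = cbox 0 (1 :: real ^ 'd)"
  by (auto simp: mem_box_cart)

lemma zero_one_polytope_subset_cube:
  assumes "zero_one_polytope P"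
  shows "P \<subseteq> cbox 0 1"
proof -
  obtain S where S: "\<forall>x\<in>S. \<forall>i. x $ i = 0 \<or> x $ i = 1" "P = convex hull S"
    using assms unfolding zero_one_polytope_def by auto
  have "S \<subseteq> cbox 0 1"
  proof
    fix x assume x: "x \<in> S"
    have "x $ i = 0 \<or> x $ i = 1" for i using S(1) x by blast
    then have "0 \<le> x $ i \<and> x $ i \<le> 1" for i by (metis order.refl zero_le_one)
    then show "x \<in> cbox 0 1" by (simp add: mem_box_cart)
  qed
  then show ?thesis unfolding S(2) by (rule hull_minimal) (rule convex_box)
qed

lemma compact_convex_zero_one_polytope:
  assumes "zero_one_polytope P"
  shows "compact P" "convex P"
  using assms unfolding zero_one_polytope_def by (auto intro: compact_convex_hull finite_imp_compact)

lemma closed_convex_up: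
  assumes "compact P" "convex P"
  shows "closed (up P)" "convex (up P)"
proof -
  have up_sums: "up P = (\<Union>x\<in>orthant. \<Union>y\<in>P. {x + y})"
    unfolding up_eq by (auto simp: add.commute) (metis add.commute)
  have orth: "closed (orthant :: (real ^ 'd) set)" "convex (orthant :: (real ^ 'd) set)"
    unfolding orthant_def by (auto simp: closed_positive_orthant convex_def)
  show "closed (up P)" unfolding up_sums by (rule closed_compact_sums[OF orth(1) assms(1)])
  show "convex (up P)" unfolding up_sums by (rule convex_sums[OF orth(2) assms(2)])
qed

lemma separating_nonneg_normal:
  fixes D :: "(real ^ 'd) set"
  assumes "closed D" "convex D" "D \<noteq> {}" "up D \<subseteq> D" "u \<notin> D"
  obtains a \<beta> where "\<And>i. 0 \<le> a $ i" "a \<bullet> u < \<beta>" "\<And>x. x \<in> D \<Longrightarrow> \<beta> < a \<bullet> x"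
proof -
  obtain a \<beta> where sep: "a \<bullet> u < \<beta>" "\<forall>x\<in>D. \<beta> < a \<bullet> x"
    using separating_hyperplane_closed_point[OF assms(2,1,5)] by auto
  obtain d where d: "d \<in> D" using assms(3) by auto
  have "0 \<le> a $ i" for i
  proof (rule ccontr)
    assume neg: "\<not> 0 \<le> a $ i"
    define t where "t = (a \<bullet> d - \<beta>) / (- a $ i) + 1"
    have "t > 0" using sep(2) d neg unfolding t_def by (auto intro!: add_nonneg_pos divide_nonneg_pos)
    then have "d + t *\<^sub>R axis i 1 \<in> up D" using d unfolding up_eq orthant_def by (force simp: axis_def)
    then have "\<beta> < a \<bullet> (d + t *\<^sub>R axis i 1)" using assms(4) sep(2) by blast
    also have "a \<bullet> (d + t *\<^sub>R axis i 1) = a \<bullet> d + t * a $ i" by (simp add: inner_add_right inner_axis)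
    also have "a \<bullet> d + t * a $ i = \<beta> + a $ i" unfolding t_def using neg by (simp add: field_simps)
    finally show False using neg by simp
  qed
  then show ?thesis using that sep by blast
qed

lemma capped_normal_lower_bound:
  fixes S :: "(real ^ 'd) set"
  assumes S01: "\<And>s i. s \<in> S \<Longrightarrow> s $ i = 0 \<or> s $ i = 1" and a: "\<And>i. 0 \<le> a $ i" and "0 \<le> \<delta>"
    and aS: "\<And>s. s \<in> S \<Longrightarrow> \<delta> \<le> a \<bullet> s" and x: "x \<in> up (convex hull S)"
  shows "\<delta> \<le> (\<chi> i. min (a $ i) \<delta>) \<bullet> x"
proof -
  define c where "c = (\<chi> i. min (a $ i) \<delta>)"
  have c0: "0 \<le> c $ i" for i unfolding c_def using a \<open>0 \<le> \<delta>\<close> by simp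
  have cS: "\<delta> \<le> c \<bullet> s" if s: "s \<in> S" for s
  proof (cases "\<exists>i. s $ i = 1 \<and> \<delta> \<le> a $ i")
    case True
    then obtain i where i: "s $ i = 1" "\<delta> \<le> a $ i" by auto
    have "0 \<le> s $ j" for j using S01[OF s, of j] by auto
    then have "c $ i * s $ i \<le> (\<Sum>j\<in>UNIV. c $ j * s $ j)"
      by (intro member_le_sum) (auto intro: mult_nonneg_nonneg c0)
    then show ?thesis using i unfolding c_def inner_vec_def by simp
  next
    case False
    then have cj: "c $ j * s $ j = a $ j * s $ j" for j
      using S01[OF s, of j] unfolding c_def by auto
    have "c \<bullet> s = a \<bullet> s" unfolding inner_vec_def inner_real_def cj ..
    then show ?thesis using aS[OF s] by simp
  qed
  obtain p v where pv: "x = p + v" "p \<in> convex hull S" "v \<in> orthant" using x unfolding up_eq by blast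
  have "convex hull S \<subseteq> {x. \<delta> \<le> c \<bullet> x}"
    by (rule hull_minimal) (use cS convex_halfspace_ge in auto)
  then have "\<delta> \<le> c \<bullet> p" using pv by auto
  moreover have "0 \<le> c \<bullet> v" using c0 pv(3) unfolding orthant_def inner_vec_def by (auto intro!: sum_nonneg)
  ultimately show ?thesis unfolding pv(1) c_def by (simp add: inner_add_right)
qed

lemma inner_cube_le:
  fixes c x :: "real ^ 'd" and \<delta> :: real
  assumes "\<And>i. 0 \<le> c $ i" "\<And>i. c $ i \<le> \<delta>" and "x \<in> cbox 0 1"
  shows "0 \<le> c \<bullet> x" "c \<bullet> x \<le> real CARD('d) * \<delta>"
proof -
  have x: "0 \<le> x $ i" "x $ i \<le> 1" for i using assms(3) by (auto simp: mem_box_cart)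
  show "0 \<le> c \<bullet> x" unfolding inner_vec_def using assms(1) x by (auto intro!: sum_nonneg)
  have "c $ i * x $ i \<le> \<delta>" for i
  proof -
    have "c $ i * x $ i \<le> c $ i * 1" using x(2)[of i] assms(1)[of i] by (rule mult_left_mono)
    then show ?thesis using assms(2)[of i] by simp
  qed
  then have "(\<Sum>i\<in>UNIV. c $ i * x $ i) \<le> (\<Sum>i\<in>(UNIV :: 'd set). \<delta>)" by (intro sum_mono)
  then show "c \<bullet> x \<le> real CARD('d) * \<delta>" unfolding inner_vec_def by simp
qed

lemma rdist_ratio_lower_bound:
  assumes "C \<noteq> {}" "u \<in> R" "0 < g" "0 < D"
    and width: "\<And>x x'. x \<in> C \<Longrightarrow> x' \<in> C \<Longrightarrow> \<bar>c \<bullet> x - c \<bullet> x'\<bar> \<le> D"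
    and gap: "\<And>x. x \<in> C \<Longrightarrow> c \<bullet> u + g \<le> c \<bullet> x"
  shows "ereal (g / D) \<le> rdist_ratio c C R"
proof -
  define num where "num = (SUP b\<in>R. INF a\<in>C. ereal \<bar>c \<bullet> b - c \<bullet> a\<bar>)"
  define den where "den = (SUP p\<in>C \<times> C. ereal \<bar>c \<bullet> fst p - c \<bullet> snd p\<bar>)"
  have "ereal g \<le> (INF a\<in>C. ereal \<bar>c \<bullet> u - c \<bullet> a\<bar>)"
    using gap by (intro INF_greatest) force
  also have "\<dots> \<le> num" unfolding num_def using \<open>u \<in> R\<close> by (rule SUP_upper)
  finally have num: "ereal g \<le> num" .
  have den_le: "den \<le> ereal D" unfolding den_def using width by (intro SUP_least) auto
  obtain x where "x \<in> C" using assms(1) by auto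
  then have "ereal \<bar>c \<bullet> fst (x, x) - c \<bullet> snd (x, x)\<bar> \<le> den"
    unfolding den_def by (intro SUP_upper) auto
  then have "0 \<le> den" by (simp add: zero_ereal_def)
  show ?thesis
  proof (cases "den = 0")
    case True
    then have "rdist_ratio c C R = \<infinity>"
      using num \<open>0 < g\<close> unfolding rdist_ratio_def num_def den_def Let_def by auto
    then show ?thesis by simp
  next
    case False
    then obtain D0 where D0: "den = ereal D0" "0 < D0" "D0 \<le> D"
      using \<open>0 \<le> den\<close> den_le by (cases den) auto
    have "ereal (g / D) \<le> ereal (g / D0)"
      using D0 \<open>0 < g\<close> by (simp add: frac_le)
    also have "\<dots> = ereal g / ereal D0" using D0 by simp
    also have "\<dots> \<le> num / ereal D0" using num D0 by (intro ereal_divide_right_mono) auto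
    also have "\<dots> = rdist_ratio c C R"
      using D0 unfolding rdist_ratio_def num_def den_def Let_def by auto
    finally show ?thesis .
  qed
qed

lemma capped_separation_from_scaled_up:
  fixes P :: "(real ^ 'd) set"
  assumes zo: "zero_one_polytope P" and "P \<noteq> {}" and \<epsilon>: "0 < \<epsilon>" "\<epsilon> < 1"
    and u: "u \<in> orthant" "u \<notin> (\<lambda>x. (1 - \<epsilon>) *\<^sub>R x) ` up P"
  obtains c \<delta> where "0 < \<delta>" "\<And>i. 0 \<le> c $ i" "\<And>i. c $ i \<le> \<delta>"
    "\<And>x. x \<in> up P \<Longrightarrow> \<delta> \<le> c \<bullet> x" "c \<bullet> u < (1 - \<epsilon>) * \<delta>"
proof -
  define D where "D = (\<lambda>x. (1 - \<epsilon>) *\<^sub>R x) ` up P"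
  obtain S where S01: "\<And>s i. s \<in> S \<Longrightarrow> s $ i = 0 \<or> s $ i = 1" and P: "P = convex hull S"
    using zo unfolding zero_one_polytope_def by auto
  note up_P = closed_convex_up[OF compact_convex_zero_one_polytope[OF zo]]
  have "closed D" unfolding D_def by (rule closed_scaling[OF up_P(1)])
  moreover have "convex D" unfolding D_def by (rule convex_scaling[OF up_P(2)])
  moreover have "D \<noteq> {}" using \<open>P \<noteq> {}\<close> subset_up[of P] unfolding D_def by blast
  moreover have "up D \<subseteq> D" unfolding D_def using \<epsilon> by (simp add: up_scaleR_up)
  moreover have "u \<notin> D" using u(2) unfolding D_def .
  ultimately obtain a \<beta> where a: "\<And>i. 0 \<le> a $ i" and "a \<bullet> u < \<beta>"
    and sep: "\<And>x. x \<in> D \<Longrightarrow> \<beta> < a \<bullet> x"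
    using separating_nonneg_normal by metis
  have "0 \<le> a \<bullet> u" using a u(1) unfolding orthant_def inner_vec_def by (auto intro!: sum_nonneg)
  define \<delta> where "\<delta> = \<beta> / (1 - \<epsilon>)"
  have \<beta>: "\<beta> = (1 - \<epsilon>) * \<delta>" and "0 < \<delta>"
    using \<open>a \<bullet> u < \<beta>\<close> \<open>0 \<le> a \<bullet> u\<close> \<epsilon> unfolding \<delta>_def by auto
  have a_S: "\<delta> \<le> a \<bullet> s" if "s \<in> S" for s
  proof -
    have "s \<in> up P" using that hull_subset[of S convex] subset_up[of P] unfolding P by blast
    then have "(1 - \<epsilon>) *\<^sub>R s \<in> D" unfolding D_def by (rule imageI)
    then have "\<beta> < a \<bullet> ((1 - \<epsilon>) *\<^sub>R s)" by (rule sep)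
    then have "(1 - \<epsilon>) * \<delta> < (1 - \<epsilon>) * (a \<bullet> s)" unfolding \<beta> by simp
    then show ?thesis using \<epsilon> by (simp add: mult_less_cancel_left_pos)
  qed
  define c where "c = (\<chi> i. min (a $ i) \<delta>)"
  have c_up: "\<delta> \<le> c \<bullet> x" if "x \<in> up P" for x
    unfolding c_def using capped_normal_lower_bound[OF S01 a less_imp_le[OF \<open>0 < \<delta>\<close>] a_S that[unfolded P]] .
  have "c \<bullet> u \<le> a \<bullet> u" unfolding inner_vec_def inner_real_def
  proof (rule sum_mono)
    fix i show "c $ i * u $ i \<le> a $ i * u $ i"
      using u(1) unfolding orthant_def c_def by (auto intro: mult_right_mono)
  qed
  then have c_u: "c \<bullet> u < (1 - \<epsilon>) * \<delta>" using \<open>a \<bullet> u < \<beta>\<close> unfolding \<beta> by linarith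
  have c: "0 \<le> c $ i" "c $ i \<le> \<delta>" for i unfolding c_def using a[of i] \<open>0 < \<delta>\<close> by auto
  show ?thesis by (rule that[OF \<open>0 < \<delta>\<close> c c_up c_u])
qed

lemma rdist_bound_nonneg_part_subset_scaled_up:
  fixes P R :: "(real ^ 'd) set"
  assumes zo: "zero_one_polytope P" and "P \<noteq> {}" and \<epsilon>: "0 < \<epsilon>" "\<epsilon> < 1"
    and rd: "rdist (up P \<inter> cbox 0 1) R \<le> ereal (\<epsilon> / real CARD('d))"
  shows "R \<inter> orthant \<subseteq> (\<lambda>x. (1 - \<epsilon>) *\<^sub>R x) ` up P"
proof
  fix u assume u: "u \<in> R \<inter> orthant"
  show "u \<in> (\<lambda>x. (1 - \<epsilon>) *\<^sub>R x) ` up P"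
  proof (rule ccontr)
    assume "u \<notin> (\<lambda>x. (1 - \<epsilon>) *\<^sub>R x) ` up P"
    moreover have "u \<in> orthant" using u by simp
    ultimately obtain c \<delta> where "0 < \<delta>" and c: "\<And>i. 0 \<le> c $ i" "\<And>i. c $ i \<le> \<delta>"
      and c_up: "\<And>x. x \<in> up P \<Longrightarrow> \<delta> \<le> c \<bullet> x" and c_u: "c \<bullet> u < (1 - \<epsilon>) * \<delta>"
      using capped_separation_from_scaled_up[OF zo \<open>P \<noteq> {}\<close> \<epsilon>] by metis
    define C where "C = up P \<inter> cbox 0 1"
    have "C \<noteq> {}"
      using \<open>P \<noteq> {}\<close> subset_up[of P] zero_one_polytope_subset_cube[OF zo] unfolding C_def by blast
    have c_bounds: "0 \<le> c \<bullet> x" "c \<bullet> x \<le> real CARD('d) * \<delta>" if "x \<in> C" for x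
      using inner_cube_le[of c \<delta> x, OF c] that unfolding C_def by auto
    have "ereal ((\<delta> - c \<bullet> u) / (real CARD('d) * \<delta>)) \<le> rdist_ratio c C R"
    proof (rule rdist_ratio_lower_bound[OF \<open>C \<noteq> {}\<close>])
      show "u \<in> R" using u by simp
      have "(1 - \<epsilon>) * \<delta> = \<delta> - \<epsilon> * \<delta>" by (simp add: algebra_simps)
      then show "0 < \<delta> - c \<bullet> u" using c_u mult_pos_pos[OF \<epsilon>(1) \<open>0 < \<delta>\<close>] by linarith
      show "0 < real CARD('d) * \<delta>" using \<open>0 < \<delta>\<close> by simp
      show "\<bar>c \<bullet> x - c \<bullet> x'\<bar> \<le> real CARD('d) * \<delta>" if "x \<in> C" "x' \<in> C" for x x'
        using c_bounds[OF that(1)] c_bounds[OF that(2)] by linarith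
      show "c \<bullet> u + (\<delta> - c \<bullet> u) \<le> c \<bullet> x" if "x \<in> C" for x
        using c_up that unfolding C_def by auto
    qed
    also have "\<dots> \<le> rdist C R" unfolding rdist_def by (rule SUP_upper) simp
    also have "\<dots> \<le> ereal (\<epsilon> / real CARD('d))" using rd unfolding C_def .
    finally have le: "(\<delta> - c \<bullet> u) / (real CARD('d) * \<delta>) \<le> \<epsilon> / real CARD('d)" by simp
    have "(\<delta> - c \<bullet> u) / (real CARD('d) * \<delta>) = ((\<delta> - c \<bullet> u) / \<delta>) / real CARD('d)"
      by simp
    with le have "((\<delta> - c \<bullet> u) / \<delta>) / real CARD('d) \<le> \<epsilon> / real CARD('d)" by (simp only:)
    then have "(\<delta> - c \<bullet> u) / \<delta> \<le> \<epsilon>" unfolding divide_le_cancel by simp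
    then have "\<delta> - c \<bullet> u \<le> \<epsilon> * \<delta>" using \<open>0 < \<delta>\<close> by (simp add: pos_divide_le_eq)
    moreover have "(1 - \<epsilon>) * \<delta> = \<delta> - \<epsilon> * \<delta>" by (simp add: algebra_simps)
    ultimately show False using c_u by linarith
  qed
qed

theorem mainTheorem14:
  fixes P :: "(real ^ 'd) set" and \<epsilon> M :: real
  assumes "zero_one_polytope P"
    and "0 < \<epsilon>" and "\<epsilon> < 1" and "0 < M"
    and "\<And>K. polyhedron K \<Longrightarrow> up P \<subseteq> K \<Longrightarrow> K \<subseteq> (\<lambda>x. (1 - \<epsilon>) *\<^sub>R x) ` up P
          \<Longrightarrow> real (xc K) \<ge> M"
  shows "\<not> (\<exists>l Q a b. is_LEF (\<epsilon> / real CARD('d)) (up P \<inter> {x. \<forall>i. 0 \<le> x $ i \<and> x $ i \<le> 1}) l Q a b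
              \<and> real (nfacets l Q) < M - 3 * real CARD('d))"
proof
  assume "\<exists>l Q a b. is_LEF (\<epsilon> / real CARD('d)) (up P \<inter> {x. \<forall>i. 0 \<le> x $ i \<and> x $ i \<le> 1}) l Q a b
              \<and> real (nfacets l Q) < M - 3 * real CARD('d)"
  then obtain l Q a b where Q: "polyhedronL l Q" and C: "up P \<inter> cbox 0 1 \<subseteq> affmap l a b ` Q"
    and rd: "rdist (up P \<inter> cbox 0 1) (affmap l a b ` Q) \<le> ereal (\<epsilon> / real CARD('d))"
    and small: "real (nfacets l Q) < M - 3 * real CARD('d)"
    unfolding is_LEF_def cube_eq_cbox by blast
  show False
  proof (cases "P = {}")
    case True
    then have "M \<le> real (xc ({} :: (real ^ 'd) set))" using assms(5)[of "{}"] by (simp add: up_def)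
    then show False using assms(4) by (simp add: xc_empty)
  next
    case False
    let ?K = "up (affmap l a b ` Q \<inter> orthant)"
    have "P \<subseteq> affmap l a b ` Q \<inter> orthant"
      using C subset_up[of P] zero_one_polytope_subset_cube[OF assms(1)]
      by (auto simp: orthant_def mem_box_cart)
    then have "up P \<subseteq> ?K" by (rule up_mono)
    moreover have "?K \<subseteq> (\<lambda>x. (1 - \<epsilon>) *\<^sub>R x) ` up P"
      using up_mono[OF rdist_bound_nonneg_part_subset_scaled_up[OF assms(1) False assms(2,3) rd]]
        up_scaleR_up[of "1 - \<epsilon>" P] assms(3) by simp
    ultimately have "M \<le> real (xc ?K)" using assms(5) dominant_hull_polyhedron_xc(1)[OF Q] by blast
    also have "\<dots> \<le> real (nfacets l Q) + 2 * real CARD('d)"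
      using dominant_hull_polyhedron_xc(2)[OF Q, of a b] by linarith
    finally show False using small by simp
  qed
qed

end
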